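(* Let $b_i>0$ ($i\ge0$), $a_i>0$ ($i\ge1$) and $c_i\le0$ ($i\ge0$) be real numbers. Put $\mu_0=1$, $\mu_i=\frac{b_0\cdots b_{i-1}}{a_1\cdots a_i}$ ($i\ge1$). Define $$\tilde q_n^{(k)}=\begin{cases}-c_n,&0\le k\le n-2,\\ a_n-c_n,&k=n-1,\end{cases}\qquad \widetilde F_i^{(i)}=1,\quad \widetilde F_n^{(i)}=\frac1{b_n}\sum_{k=i}^{n-1}\tilde q_n^{(k)}\widetilde F_k^{(i)}\ (n>i\ge0),$$ $$h_n=1-\sum_{0\le k\le n-1}\ \sum_{0\le j\le k}\widetilde F_k^{(j)}\frac{c_j}{b_j},\qquad n\ge0,$$ and $$\lambda_0=\inf\Big\{\sum_{k\ge0}\mu_k\big[b_k(f_{k+1}-f_k)^2-c_kf_k^2\big]:\ \sum_{k\ge0}\mu_kf_k^2=1,\ f\text{ finitely supported on }\{0,1,2,\dots\}\Big\}.$$ Let $$\tilde\delta=\sup_{n\ge0}\sum_{j=0}^n\mu_jh_j^2\sum_{k\ge n}\frac1{h_kh_{k+1}\mu_kb_k}.$$ Then $\tilde\delta\le\lambda_0^{-1}\le4\tilde\delta$ (with $1/0=\infty$). In particular, $\lambda_0>0$ if and only if $\tilde\delta<\infty$. *)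

theory Defs
  imports "HOL-Analysis.Analysis"
begin

definition mu :: "(nat \<Rightarrow> real) \<Rightarrow> (nat \<Rightarrow> real) \<Rightarrow> nat \<Rightarrow> real" where
  "mu a b i = (\<Prod>j<i. b j) / (\<Prod>j\<in>{1..i}. a j)"

text \<open>q~_n^(k), only used for k \<le> n-1 (value 0 elsewhere is irrelevant).\<close>
definition qt :: "(nat \<Rightarrow> real) \<Rightarrow> (nat \<Rightarrow> real) \<Rightarrow> nat \<Rightarrow> nat \<Rightarrow> real" where
  "qt a c n k = (if k + 2 \<le> n then - c n else if k + 1 = n then a n - c n else 0)"

text \<open>F~_n^(i) (written Ft a b c i n); F~_i^(i) = 1, recursion for n > i; 0 for n < i (unused).\<close>
function Ft :: "(nat \<Rightarrow> real) \<Rightarrow> (nat \<Rightarrow> real) \<Rightarrow> (nat \<Rightarrow> real) \<Rightarrow> nat \<Rightarrow> nat \<Rightarrow> real" where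
  "Ft a b c i n = (if n \<le> i then (if n = i then 1 else 0)
     else (1 / b n) * (\<Sum>k\<in>{i..<n}. qt a c n k * Ft a b c i k))"
  by auto
termination by (relation "Wellfounded.measure (\<lambda>(a, b, c, i, n). n)") auto

declare Ft.simps[simp del]

definition hh :: "(nat \<Rightarrow> real) \<Rightarrow> (nat \<Rightarrow> real) \<Rightarrow> (nat \<Rightarrow> real) \<Rightarrow> nat \<Rightarrow> real" where
  "hh a b c n = 1 - (\<Sum>k<n. \<Sum>j\<le>k. Ft a b c j k * c j / b j)"

definition lambda0 :: "(nat \<Rightarrow> real) \<Rightarrow> (nat \<Rightarrow> real) \<Rightarrow> (nat \<Rightarrow> real) \<Rightarrow> real" where
  "lambda0 a b c = Inf {(\<Sum>k. mu a b k * (b k * (f (Suc k) - f k)^2 - c k * (f k)^2)) | f.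
      finite {k. f k \<noteq> 0} \<and> (\<Sum>k. mu a b k * (f k)^2) = 1}"

definition delta :: "(nat \<Rightarrow> real) \<Rightarrow> (nat \<Rightarrow> real) \<Rightarrow> (nat \<Rightarrow> real) \<Rightarrow> ennreal" where
  "delta a b c = (SUP n. ennreal (\<Sum>j\<le>n. mu a b j * (hh a b c j)^2) *
      (\<Sum>k. ennreal (1 / (hh a b c (k + n) * hh a b c (Suc (k + n)) * mu a b (k + n) * b (k + n)))))"

end

theory Submission
  imports Defs
begin

text \<open>
  The function \<open>h\<close> built from the \<open>F~\<close> is harmonic for the operator with rates
  \<open>a, b, c\<close>, and \<open>h \<ge> 1\<close> because \<open>c \<le> 0\<close>.  Writing \<open>f = h * g\<close>, the ground state transform
  turns the quadratic form of \<open>\<lambda>\<^sub>0\<close> into \<open>\<Sum>k. w k * (g (k+1) - g k)\<^sup>2\<close> with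
  \<open>w k = h k * h (k+1) * \<mu> k * b k\<close> and the norm into \<open>\<Sum>k. \<nu> k * (g k)\<^sup>2\<close> with \<open>\<nu> k = \<mu> k * (h k)\<^sup>2\<close>.
  So \<open>1 / \<lambda>\<^sub>0\<close> is the optimal constant of a weighted discrete Hardy inequality for functions
  vanishing at infinity, and \<open>\<delta>~\<close> is exactly Muckenhoupt's constant \<open>B\<close> for it; Muckenhoupt's
  criterion \<open>B \<le> 1 / \<lambda>\<^sub>0 \<le> 4 B\<close> is the claim.
\<close>

section \<open>Discrete Hardy inequality\<close>

lemma sum_triangle_swap:
  fixes F :: "nat \<Rightarrow> nat \<Rightarrow> 'a::comm_monoid_add"
  shows "(\<Sum>k<N. \<Sum>m\<in>{k..<N}. F k m) = (\<Sum>m<N. \<Sum>k\<le>m. F k m)"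
  by (induction N) (simp_all add: sum.distrib lessThan_Suc_atMost[symmetric] add_ac)

lemma sum_square_le_weighted:
  fixes x p :: "'a \<Rightarrow> real"
  assumes "\<And>i. i \<in> A \<Longrightarrow> p i > 0"
  shows "(\<Sum>i\<in>A. x i)^2 \<le> (\<Sum>i\<in>A. (x i)^2 / p i) * (\<Sum>i\<in>A. p i)"
proof -
  have "(\<Sum>i\<in>A. x i) = (\<Sum>i\<in>A. (x i / sqrt (p i)) * sqrt (p i))"
    using assms by (intro sum.cong) (auto dest: order.strict_implies_not_eq[symmetric])
  then have "(\<Sum>i\<in>A. x i)^2 \<le> (\<Sum>i\<in>A. (x i / sqrt (p i))^2) * (\<Sum>i\<in>A. (sqrt (p i))^2)"
    using Cauchy_Schwarz_ineq_sum by metis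
  also have "\<dots> = (\<Sum>i\<in>A. (x i)^2 / p i) * (\<Sum>i\<in>A. p i)"
    using assms by (intro arg_cong2[where f="(*)"] sum.cong) (auto simp: power_divide less_imp_le)
  finally show ?thesis .
qed

lemma diff_div_sqrt_le:
  fixes x y :: real
  assumes "0 \<le> y" "y \<le> x" "0 < x"
  shows "(x - y) / sqrt x \<le> 2 * (sqrt x - sqrt y)"
proof -
  have "x - y = (sqrt x - sqrt y) * (sqrt x + sqrt y)"
    using assms by (simp add: algebra_simps)
  also have "\<dots> \<le> (sqrt x - sqrt y) * (2 * sqrt x)"
    using assms by (intro mult_left_mono) auto
  finally show ?thesis
    using assms by (simp add: divide_le_eq mult_ac)
qed

lemma sum_decrements_div_sqrt_le:
  fixes W :: "nat \<Rightarrow> real"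
  assumes pos: "\<And>m. 0 < W m" and decr: "\<And>m. W (Suc m) \<le> W m"
  shows "(\<Sum>m\<in>{k..<N}. (W m - W (Suc m)) / sqrt (W m)) \<le> 2 * sqrt (W k)"
proof (cases "k \<le> N")
  case True
  have "(\<Sum>m\<in>{k..<N}. (W m - W (Suc m)) / sqrt (W m))
      \<le> (\<Sum>m\<in>{k..<N}. 2 * (sqrt (W m) - sqrt (W (Suc m))))"
    using pos decr by (intro sum_mono diff_div_sqrt_le) (auto simp: less_imp_le)
  also have "\<dots> = 2 * (\<Sum>m\<in>{k..<N}. sqrt (W m) - sqrt (W (Suc m)))"
    by (rule sum_distrib_left[symmetric])
  also have "\<dots> = 2 * (sqrt (W k) - sqrt (W N))"
    using sum_Suc_diff'[OF True, of "\<lambda>m. - sqrt (W m)"] by simp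
  also have "\<dots> \<le> 2 * sqrt (W k)"
    using pos[of N] by simp
  finally show ?thesis .
qed (use pos in \<open>simp add: less_imp_le\<close>)

lemma sum_div_sqrt_partial_sums_le:
  fixes \<nu> :: "nat \<Rightarrow> real"
  assumes pos: "\<And>k. 0 < \<nu> k"
  shows "(\<Sum>k\<le>m. \<nu> k / sqrt (\<Sum>j\<le>k. \<nu> j)) \<le> 2 * sqrt (\<Sum>j\<le>m. \<nu> j)"
proof (induction m)
  case 0
  show ?case
    using pos[of 0] by (simp add: real_div_sqrt less_imp_le)
next
  case (Suc m)
  have "\<nu> (Suc m) / sqrt (\<Sum>j\<le>Suc m. \<nu> j) \<le> 2 * (sqrt (\<Sum>j\<le>Suc m. \<nu> j) - sqrt (\<Sum>j\<le>m. \<nu> j))"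
    using diff_div_sqrt_le[of "\<Sum>j\<le>m. \<nu> j" "\<Sum>j\<le>Suc m. \<nu> j"] pos
    by (simp add: sum_nonneg sum_pos less_imp_le add_pos_pos)
  with Suc.IH show ?case
    by simp
qed

lemma sum_mult_sqrt_le:
  fixes \<nu> W :: "nat \<Rightarrow> real"
  assumes \<nu>_pos: "\<And>k. 0 < \<nu> k" and W_pos: "\<And>k. 0 < W k"
    and bound: "\<And>k. (\<Sum>j\<le>k. \<nu> j) * W k \<le> B"
  shows "(\<Sum>k\<le>m. \<nu> k * sqrt (W k)) \<le> 2 * B / sqrt (W m)"
proof -
  define V where "V k = (\<Sum>j\<le>k. \<nu> j)" for k
  have V_pos: "0 < V k" for k
    unfolding V_def using \<nu>_pos by (intro sum_pos) auto
  have B_pos: "0 < B"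
    using bound[of 0] V_pos[of 0] W_pos[of 0] unfolding V_def by (smt (verit) mult_pos_pos)
  have sqrt_W: "sqrt (W k) \<le> sqrt B / sqrt (V k)" for k
    using bound[of k] V_pos[of k] by (simp add: V_def real_sqrt_divide[symmetric] le_divide_eq mult.commute)
  have sqrt_V: "sqrt (V k) \<le> sqrt B / sqrt (W k)" for k
    using bound[of k] W_pos[of k] by (simp add: V_def real_sqrt_divide[symmetric] le_divide_eq)
  have "(\<Sum>k\<le>m. \<nu> k * sqrt (W k)) \<le> (\<Sum>k\<le>m. sqrt B * (\<nu> k / sqrt (V k)))"
  proof (intro sum_mono)
    fix k
    have "\<nu> k * sqrt (W k) \<le> \<nu> k * (sqrt B / sqrt (V k))"
      using sqrt_W[of k] \<nu>_pos[of k] by (intro mult_left_mono) auto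
    then show "\<nu> k * sqrt (W k) \<le> sqrt B * (\<nu> k / sqrt (V k))"
      by (simp add: mult.commute)
  qed
  also have "\<dots> = sqrt B * (\<Sum>k\<le>m. \<nu> k / sqrt (V k))"
    by (simp add: sum_distrib_left)
  also have "\<dots> \<le> sqrt B * (2 * sqrt (V m))"
    using sum_div_sqrt_partial_sums_le[of \<nu> m, OF \<nu>_pos] B_pos by (simp add: V_def mult_left_mono)
  also have "\<dots> \<le> sqrt B * (2 * (sqrt B / sqrt (W m)))"
    using sqrt_V[of m] B_pos by (intro mult_left_mono) auto
  also have "\<dots> = 2 * B / sqrt (W m)"
    using B_pos by simp
  finally show ?thesis .
qed

text \<open>
  Cauchy--Schwarz with the weights \<open>1 / (w m * sqrt (W m))\<close>, \<open>W\<close> the tail sums of \<open>1 / w\<close>, and then swaps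
  the order of summation; both resulting inner sums are controlled by telescoping.
\<close>
lemma discrete_hardy_inequality:
  fixes \<nu> w g :: "nat \<Rightarrow> real"
  assumes \<nu>_pos: "\<And>k. 0 < \<nu> k" and w_pos: "\<And>k. 0 < w k"
    and summable: "summable (\<lambda>k. 1 / w k)"
    and bound: "\<And>n. (\<Sum>j\<le>n. \<nu> j) * (\<Sum>k. 1 / w (k + n)) \<le> B"
    and g_N: "g N = 0"
  shows "(\<Sum>k<N. \<nu> k * (g k)^2) \<le> 4 * B * (\<Sum>k<N. w k * (g (Suc k) - g k)^2)"
proof -
  define W where "W n = (\<Sum>k. 1 / w (k + n))" for n
  define d where "d m = g (Suc m) - g m" for m
  define D where "D m = (d m)^2 * w m * sqrt (W m)" for m
  have summable_W: "summable (\<lambda>k. 1 / w (k + n))" for n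
    using summable_ignore_initial_segment[OF summable, of n] by simp
  have W_pos: "0 < W n" for n
    unfolding W_def using w_pos by (intro suminf_pos summable_W) simp
  have W_step: "W m - W (Suc m) = 1 / w m" for m
    using suminf_split_head[OF summable_W[of m]] by (simp add: W_def)
  have W_decr: "W (Suc m) \<le> W m" for m
    using W_step[of m] w_pos[of m] by (smt (verit) divide_pos_pos)
  have D_nonneg: "0 \<le> D m" for m
    unfolding D_def using w_pos[of m] W_pos[of m] by simp
  have head_bound: "(\<Sum>k\<le>m. \<nu> k * sqrt (W k)) \<le> 2 * B / sqrt (W m)" for m
    by (rule sum_mult_sqrt_le[OF \<nu>_pos W_pos]) (use bound in \<open>simp add: W_def\<close>)
  have pointwise: "\<nu> k * (g k)^2 \<le> 2 * (\<nu> k * sqrt (W k)) * (\<Sum>m\<in>{k..<N}. D m)"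
    if "k < N" for k
  proof -
    have "g k = - (\<Sum>m\<in>{k..<N}. d m)"
      using sum_Suc_diff'[of k N g] that g_N by (simp add: d_def)
    then have "(g k)^2 \<le> (\<Sum>m\<in>{k..<N}. D m) * (\<Sum>m\<in>{k..<N}. 1 / (w m * sqrt (W m)))"
      using sum_square_le_weighted[of "{k..<N}" "\<lambda>m. 1 / (w m * sqrt (W m))" d] W_pos w_pos
      by (simp add: D_def mult.assoc)
    also have "\<dots> \<le> (\<Sum>m\<in>{k..<N}. D m) * (2 * sqrt (W k))"
      using sum_decrements_div_sqrt_le[where W=W, OF W_pos W_decr] D_nonneg
      by (intro mult_left_mono sum_nonneg) (simp_all add: W_step)
    finally show ?thesis
      using \<nu>_pos[of k] by (simp add: mult_left_mono algebra_simps)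
  qed
  have "(\<Sum>k<N. \<nu> k * (g k)^2) \<le> (\<Sum>k<N. 2 * (\<nu> k * sqrt (W k)) * (\<Sum>m\<in>{k..<N}. D m))"
    using pointwise by (intro sum_mono) auto
  also have "\<dots> = 2 * (\<Sum>k<N. \<Sum>m\<in>{k..<N}. (\<nu> k * sqrt (W k)) * D m)"
    by (simp add: sum_distrib_left mult.assoc)
  also have "\<dots> = 2 * (\<Sum>m<N. D m * (\<Sum>k\<le>m. \<nu> k * sqrt (W k)))"
    by (simp add: sum_triangle_swap sum_distrib_left mult.commute)
  also have "\<dots> \<le> 2 * (\<Sum>m<N. D m * (2 * B / sqrt (W m)))"
    using head_bound D_nonneg by (intro mult_left_mono sum_mono) auto
  also have "\<dots> = 4 * B * (\<Sum>k<N. w k * (g (Suc k) - g k)^2)"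
  proof -
    have "D m * (2 * B / sqrt (W m)) = 2 * B * (w m * (d m)^2)" for m
      using W_pos[of m] by (simp add: D_def)
    then show ?thesis
      by (simp add: d_def sum_distrib_left mult.assoc)
  qed
  finally show ?thesis .
qed

lemma tail_sum_test_function:
  fixes w :: "nat \<Rightarrow> real" and n M :: nat
  assumes w_pos: "\<And>k. 0 < w k"
  defines "g k \<equiv> (\<Sum>m\<in>{n..<n+M}. if k \<le> m then 1 / w m else 0)"
  shows "\<And>k. n + M \<le> k \<Longrightarrow> g k = 0"
    and "\<And>k. k \<le> n \<Longrightarrow> g k = (\<Sum>k<M. 1 / w (k + n))"
    and "(\<Sum>k<n+M. w k * (g (Suc k) - g k)^2) = (\<Sum>k<M. 1 / w (k + n))"
proof -
  have shift: "(\<Sum>m\<in>{n..<n+M}. 1 / w m) = (\<Sum>k<M. 1 / w (k + n))"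
    using sum.shift_bounds_nat_ivl[of "\<lambda>m. 1 / w m" 0 n M]
    by (simp add: atLeast0LessThan add.commute)
  show "g k = 0" if "n + M \<le> k" for k
    using that by (simp add: g_def)
  show "g k = (\<Sum>k<M. 1 / w (k + n))" if "k \<le> n" for k
    using that by (simp add: g_def shift[symmetric])
  have "g k - g (Suc k) = (\<Sum>m\<in>{n..<n+M}. if m = k then 1 / w m else 0)" for k
    unfolding g_def sum_subtractf[symmetric] by (intro sum.cong) auto
  then have "g k - g (Suc k) = (if k \<in> {n..<n+M} then 1 / w k else 0)" for k
    by simp
  then have "w k * (g (Suc k) - g k)^2 = (if k \<in> {n..<n+M} then 1 / w k else 0)" for k
    unfolding power2_commute[of "g (Suc k)"] using w_pos[of k] by (simp add: power2_eq_square)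
  then have "(\<Sum>k<n+M. w k * (g (Suc k) - g k)^2) = (\<Sum>k\<in>{..<n+M} \<inter> {n..<n+M}. 1 / w k)"
    by (simp add: sum.inter_restrict)
  also have "{..<n+M} \<inter> {n..<n+M} = {n..<n+M}"
    by auto
  finally show "(\<Sum>k<n+M. w k * (g (Suc k) - g k)^2) = (\<Sum>k<M. 1 / w (k + n))"
    by (simp add: shift)
qed

lemma hardy_inequality_imp_muckenhoupt_bound:
  fixes \<nu> w :: "nat \<Rightarrow> real"
  assumes \<nu>_nonneg: "\<And>k. 0 \<le> \<nu> k" and w_pos: "\<And>k. 0 < w k"
    and hardy: "\<And>g N. (\<And>k. N \<le> k \<Longrightarrow> g k = 0) \<Longrightarrow>
      L * (\<Sum>k<N. \<nu> k * (g k)^2) \<le> (\<Sum>k<N. w k * (g (Suc k) - g k)^2)"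
  shows "L * ((\<Sum>j\<le>n. \<nu> j) * (\<Sum>k<M. 1 / w (k + n))) \<le> 1"
proof -
  define P where "P = (\<Sum>k<M. 1 / w (k + n))"
  define g where "g k = (\<Sum>m\<in>{n..<n+M}. if k \<le> m then 1 / w m else 0)" for k
  note g = tail_sum_test_function[where w=w and n=n and M=M, OF w_pos, folded g_def P_def]
  have P_nonneg: "0 \<le> P"
    unfolding P_def using w_pos by (intro sum_nonneg) (simp add: less_imp_le)
  have "(\<Sum>j\<le>n. \<nu> j) * P^2 = (\<Sum>k\<le>n. \<nu> k * (g k)^2)"
    by (simp add: sum_distrib_right g(2))
  also have "\<dots> \<le> (\<Sum>k<n+M+Suc n. \<nu> k * (g k)^2)"
    using \<nu>_nonneg by (intro sum_mono2) auto
  also have "\<dots> = (\<Sum>k<n+M. \<nu> k * (g k)^2)"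
    using g(1) by (intro sum.mono_neutral_right) auto
  finally have norm: "(\<Sum>j\<le>n. \<nu> j) * P^2 \<le> (\<Sum>k<n+M. \<nu> k * (g k)^2)" .
  have VP_nonneg: "0 \<le> (\<Sum>j\<le>n. \<nu> j) * P"
    using \<nu>_nonneg P_nonneg by (simp add: sum_nonneg)
  have "L * ((\<Sum>j\<le>n. \<nu> j) * P) \<le> 1"
  proof (cases "L \<le> 0 \<or> P = 0")
    case True
    then show ?thesis
      using VP_nonneg mult_nonpos_nonneg by fastforce
  next
    case False
    have "L * ((\<Sum>j\<le>n. \<nu> j) * P) * P \<le> L * (\<Sum>k<n+M. \<nu> k * (g k)^2)"
      using norm False by (simp add: power2_eq_square mult.assoc)
    also have "\<dots> \<le> 1 * P"
      using hardy[of "n + M" g] g(1,3) by simp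
    finally show ?thesis
      using False P_nonneg by simp
  qed
  then show ?thesis
    by (simp add: P_def)
qed

definition muckenhoupt_const :: "(nat \<Rightarrow> real) \<Rightarrow> (nat \<Rightarrow> real) \<Rightarrow> ennreal" where
  "muckenhoupt_const \<nu> w = (SUP n. ennreal (\<Sum>j\<le>n. \<nu> j) * (\<Sum>k. ennreal (1 / w (k + n))))"

lemma muckenhoupt_const_le:
  fixes \<nu> w :: "nat \<Rightarrow> real"
  assumes \<nu>_nonneg: "\<And>k. 0 \<le> \<nu> k" and w_pos: "\<And>k. 0 < w k"
    and bound: "\<And>n M. (\<Sum>j\<le>n. \<nu> j) * (\<Sum>k<M. 1 / w (k + n)) \<le> C"
  shows "muckenhoupt_const \<nu> w \<le> ennreal C"
  unfolding muckenhoupt_const_def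
proof (rule SUP_least)
  fix n
  have "ennreal (\<Sum>j\<le>n. \<nu> j) * (\<Sum>k. ennreal (1 / w (k + n)))
      = (SUP M. ennreal (\<Sum>j\<le>n. \<nu> j) * (\<Sum>k<M. ennreal (1 / w (k + n))))"
    by (simp add: suminf_eq_SUP SUP_mult_left_ennreal)
  also have "\<dots> \<le> ennreal C"
  proof (rule SUP_least)
    fix M
    have "ennreal (\<Sum>j\<le>n. \<nu> j) * (\<Sum>k<M. ennreal (1 / w (k + n)))
        = ennreal ((\<Sum>j\<le>n. \<nu> j) * (\<Sum>k<M. 1 / w (k + n)))"
      using \<nu>_nonneg w_pos
      by (simp add: ennreal_mult sum_nonneg less_imp_le)
    also have "\<dots> \<le> ennreal C"
      by (rule ennreal_leI[OF bound])
    finally show "ennreal (\<Sum>j\<le>n. \<nu> j) * (\<Sum>k<M. ennreal (1 / w (k + n))) \<le> ennreal C" .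
  qed
  finally show "ennreal (\<Sum>j\<le>n. \<nu> j) * (\<Sum>k. ennreal (1 / w (k + n))) \<le> ennreal C" .
qed

lemma muckenhoupt_const_finite:
  fixes \<nu> w :: "nat \<Rightarrow> real"
  assumes \<nu>_pos: "\<And>k. 0 < \<nu> k" and w_pos: "\<And>k. 0 < w k"
    and finite: "muckenhoupt_const \<nu> w = ennreal B" and "0 \<le> B"
  shows "summable (\<lambda>k. 1 / w k)"
    and "\<And>n. (\<Sum>j\<le>n. \<nu> j) * (\<Sum>k. 1 / w (k + n)) \<le> B"
proof -
  have V_pos: "0 < (\<Sum>j\<le>n. \<nu> j)" for n
    using \<nu>_pos by (intro sum_pos) auto
  have term_le: "ennreal (\<Sum>j\<le>n. \<nu> j) * (\<Sum>k. ennreal (1 / w (k + n))) \<le> ennreal B" for n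
    unfolding finite[symmetric] muckenhoupt_const_def by (rule SUP_upper) simp
  have summable_tail: "summable (\<lambda>k. 1 / w (k + n))" for n
  proof (rule summable_suminf_not_top)
    show "0 \<le> 1 / w (k + n)" for k
      using w_pos[of "k + n"] by simp
    show "(\<Sum>k. ennreal (1 / w (k + n))) \<noteq> top"
      using term_le[of n] V_pos[of n] by (auto simp: ennreal_mult_eq_top_iff top_unique)
  qed
  show "summable (\<lambda>k. 1 / w k)"
    using summable_tail[of 0] by simp
  show "(\<Sum>j\<le>n. \<nu> j) * (\<Sum>k. 1 / w (k + n)) \<le> B" for n
  proof -
    have tail_nonneg: "0 \<le> (\<Sum>k. 1 / w (k + n))"
      using w_pos by (intro suminf_nonneg summable_tail) (simp add: less_imp_le)
    have "(\<Sum>k. ennreal (1 / w (k + n))) = ennreal (\<Sum>k. 1 / w (k + n))"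
      using w_pos by (intro suminf_ennreal2 summable_tail) (simp add: less_imp_le)
    then have "ennreal ((\<Sum>j\<le>n. \<nu> j) * (\<Sum>k. 1 / w (k + n))) \<le> ennreal B"
      using term_le[of n] V_pos[of n] tail_nonneg by (simp add: ennreal_mult)
    then show ?thesis
      using \<open>0 \<le> B\<close> by (simp add: ennreal_le_iff)
  qed
qed

section \<open>The harmonic function \<open>h\<close>\<close>

locale birth_death =
  fixes a b c :: "nat \<Rightarrow> real"
  assumes b_pos: "\<And>i. 0 < b i" and a_pos: "\<And>i. 1 \<le> i \<Longrightarrow> 0 < a i"
    and c_nonpos: "\<And>i. c i \<le> 0"
begin

lemma mu_pos: "0 < mu a b n"
  unfolding mu_def using b_pos a_pos by (intro divide_pos_pos prod_pos) auto

lemma mu_detailed_balance: "mu a b (Suc n) * a (Suc n) = mu a b n * b n"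
  using a_pos[of "Suc n"]
  by (simp add: mu_def prod.lessThan_Suc prod.nat_ivl_Suc' field_simps)

lemma Ft_diag: "Ft a b c j j = 1"
  by (simp add: Ft.simps)

lemma Ft_Suc:
  assumes "j \<le> m"
  shows "b (Suc m) * Ft a b c j (Suc m)
    = a (Suc m) * Ft a b c j m - c (Suc m) * (\<Sum>k\<in>{j..<Suc m}. Ft a b c j k)"
proof -
  have "b (Suc m) * Ft a b c j (Suc m) = (\<Sum>k\<in>{j..<Suc m}. qt a c (Suc m) k * Ft a b c j k)"
    using assms b_pos[of "Suc m"] by (subst Ft.simps) simp
  also have "\<dots> = (\<Sum>k\<in>{j..<m}. - c (Suc m) * Ft a b c j k) + (a (Suc m) - c (Suc m)) * Ft a b c j m"
    using assms by (simp add: qt_def)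
  also have "\<dots> = a (Suc m) * Ft a b c j m - c (Suc m) * (\<Sum>k\<in>{j..<Suc m}. Ft a b c j k)"
    using assms by (simp add: sum_distrib_left sum_negf algebra_simps)
  finally show ?thesis .
qed

abbreviation h :: "nat \<Rightarrow> real" where
  "h \<equiv> hh a b c"

lemma h_0: "h 0 = 1"
  by (simp add: hh_def)

lemma h_diff: "h n - h (Suc n) = (\<Sum>j\<le>n. Ft a b c j n * c j / b j)"
  by (simp add: hh_def)

text \<open>
  With \<open>a 0 = 0\<close>, the next two lemmas say that \<open>h\<close> is harmonic for the operator
  \<open>\<Omega> f n = b n * (f (n + 1) - f n) + a n * (f (n - 1) - f n) + c n * f n\<close>;
  the recursion defining \<open>F~\<close> is exactly what makes this work.
\<close>
lemma h_harmonic_0: "b 0 * (h 0 - h 1) = c 0"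
  using b_pos[of 0] by (simp add: h_diff[of 0, simplified] Ft_diag)

lemma h_harmonic_Suc:
  "b (Suc m) * (h (Suc m) - h (Suc (Suc m))) = a (Suc m) * (h m - h (Suc m)) + c (Suc m) * h (Suc m)"
proof -
  let ?n = "Suc m"
  let ?G = "\<lambda>j k. Ft a b c j k * c j / b j"
  have "b ?n * (h ?n - h (Suc ?n)) = (\<Sum>j\<le>m. b ?n * Ft a b c j ?n * c j / b j) + c ?n"
    using b_pos[of ?n] by (simp add: h_diff Ft_diag sum_distrib_left distrib_left mult.assoc)
  also have "(\<Sum>j\<le>m. b ?n * Ft a b c j ?n * c j / b j)
      = (\<Sum>j\<le>m. a ?n * ?G j m - c ?n * (\<Sum>k\<in>{j..<?n}. ?G j k))"
    by (intro sum.cong refl)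
      (simp add: Ft_Suc sum_distrib_left sum_distrib_right sum_divide_distrib[symmetric] algebra_simps diff_divide_distrib)
  also have "\<dots> = a ?n * (h m - h ?n) - c ?n * (\<Sum>k<?n. \<Sum>j\<le>k. ?G j k)"
    by (simp only: sum_subtractf sum_distrib_left[symmetric] h_diff lessThan_Suc_atMost[symmetric]
        sum_triangle_swap)
  also have "(\<Sum>k<?n. \<Sum>j\<le>k. ?G j k) = 1 - h ?n"
    by (simp add: hh_def)
  finally show ?thesis
    by (simp add: algebra_simps)
qed

lemma h_flux: "mu a b n * b n * (h n - h (Suc n)) = (\<Sum>j\<le>n. mu a b j * c j * h j)"
proof (induction n)
  case 0
  show ?case
    using h_harmonic_0 by (simp add: mu_def h_0)
next
  case (Suc m)
  have "mu a b (Suc m) * b (Suc m) * (h (Suc m) - h (Suc (Suc m)))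
      = mu a b (Suc m) * a (Suc m) * (h m - h (Suc m)) + mu a b (Suc m) * c (Suc m) * h (Suc m)"
    by (simp add: h_harmonic_Suc mult.assoc distrib_left)
  with Suc.IH show ?case
    by (simp add: mu_detailed_balance)
qed

lemma h_ge_1: "1 \<le> h n"
proof (induction n rule: less_induct)
  case (less n)
  show ?case
  proof (cases n)
    case (Suc m)
    have "mu a b j * c j * h j \<le> 0" if "j \<le> m" for j
    proof -
      have "0 \<le> h j"
        using less[of j] Suc that by simp
      then show ?thesis
        using mu_pos[of j] c_nonpos[of j] by (simp add: mult_nonpos_nonneg mult_nonneg_nonpos)
    qed
    then have "(\<Sum>j\<le>m. mu a b j * c j * h j) \<le> 0"
      by (intro sum_nonpos) simp
    then have "h m \<le> h (Suc m)"
      using h_flux[of m] mu_pos[of m] b_pos[of m]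
      by (smt (verit) mult_pos_pos mult_pos_neg)
    with less Suc show ?thesis
      by force
  qed (simp add: h_0)
qed

lemma h_pos: "0 < h n"
  using h_ge_1[of n] by simp

section \<open>Ground state transform\<close>

definition \<nu> :: "nat \<Rightarrow> real" where
  "\<nu> k = mu a b k * (h k)^2"

definition w :: "nat \<Rightarrow> real" where
  "w k = h k * h (Suc k) * mu a b k * b k"

lemma \<nu>_pos: "0 < \<nu> k"
  unfolding \<nu>_def using mu_pos h_pos by (simp add: power2_eq_square)

lemma w_pos: "0 < w k"
  unfolding w_def using h_pos mu_pos b_pos by simp

lemma ground_state_transform:
  "(\<Sum>k<N. mu a b k * (b k * (h (Suc k) * g (Suc k) - h k * g k)^2 - c k * (h k * g k)^2))
    = (\<Sum>k<N. w k * (g (Suc k) - g k)^2) + (\<Sum>j<N. - (mu a b j * c j * h j)) * h N * (g N)^2"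
proof (induction N)
  case (Suc N)
  let ?S = "\<lambda>N. \<Sum>j<N. - (mu a b j * c j * h j)"
  define X where "X = mu a b N * b N * (h (Suc N) - h N)"
  have S_Suc: "?S (Suc N) = X"
    using h_flux[of N] by (simp add: X_def sum_negf lessThan_Suc_atMost algebra_simps)
  then have S: "?S N = X + mu a b N * c N * h N"
    by simp
  have "(\<Sum>k<Suc N. mu a b k * (b k * (h (Suc k) * g (Suc k) - h k * g k)^2 - c k * (h k * g k)^2))
      = (\<Sum>k<N. w k * (g (Suc k) - g k)^2) + (X + mu a b N * c N * h N) * h N * (g N)^2
        + mu a b N * (b N * (h (Suc N) * g (Suc N) - h N * g N)^2 - c N * (h N * g N)^2)"
    by (simp add: Suc.IH S)
  also have "\<dots> = (\<Sum>k<Suc N. w k * (g (Suc k) - g k)^2) + X * h (Suc N) * (g (Suc N))^2"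
    unfolding X_def w_def by (simp add: power2_eq_square) algebra
  finally show ?case
    unfolding S_Suc .
qed simp

lemma finitely_supported_forms:
  assumes "\<And>k. N \<le> k \<Longrightarrow> g k = 0"
  shows "(\<Sum>k. mu a b k * (b k * (h (Suc k) * g (Suc k) - h k * g k)^2 - c k * (h k * g k)^2))
      = (\<Sum>k<N. w k * (g (Suc k) - g k)^2)"
    and "(\<Sum>k. mu a b k * (h k * g k)^2) = (\<Sum>k<N. \<nu> k * (g k)^2)"
proof -
  have "(\<Sum>k. mu a b k * (b k * (h (Suc k) * g (Suc k) - h k * g k)^2 - c k * (h k * g k)^2))
      = (\<Sum>k<N. mu a b k * (b k * (h (Suc k) * g (Suc k) - h k * g k)^2 - c k * (h k * g k)^2))"
    by (rule suminf_finite) (auto simp: assms)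
  then show "(\<Sum>k. mu a b k * (b k * (h (Suc k) * g (Suc k) - h k * g k)^2 - c k * (h k * g k)^2))
      = (\<Sum>k<N. w k * (g (Suc k) - g k)^2)"
    by (simp add: ground_state_transform assms)
  have "(\<Sum>k. mu a b k * (h k * g k)^2) = (\<Sum>k<N. mu a b k * (h k * g k)^2)"
    by (rule suminf_finite) (auto simp: assms)
  then show "(\<Sum>k. mu a b k * (h k * g k)^2) = (\<Sum>k<N. \<nu> k * (g k)^2)"
    by (simp add: \<nu>_def power_mult_distrib mult.assoc)
qed

text \<open>The variable \<open>g\<close> stands for \<open>f / h\<close>, with \<open>f\<close> as in the definition of \<open>\<lambda>\<^sub>0\<close>.\<close>
definition normalized_energies :: "real set" where
  "normalized_energies = {(\<Sum>k<N. w k * (g (Suc k) - g k)^2) | g N.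
      (\<forall>k\<ge>N. g k = 0) \<and> (\<Sum>k<N. \<nu> k * (g k)^2) = 1}"

lemma lambda0_ground_state: "lambda0 a b c = Inf normalized_energies"
  unfolding lambda0_def normalized_energies_def
proof (intro arg_cong[where f=Inf] set_eqI iffI)
  fix x
  assume "x \<in> {(\<Sum>k. mu a b k * (b k * (f (Suc k) - f k)^2 - c k * (f k)^2)) | f.
      finite {k. f k \<noteq> 0} \<and> (\<Sum>k. mu a b k * (f k)^2) = 1}"
  then obtain f where x: "x = (\<Sum>k. mu a b k * (b k * (f (Suc k) - f k)^2 - c k * (f k)^2))"
    and fin: "finite {k. f k \<noteq> 0}" and norm: "(\<Sum>k. mu a b k * (f k)^2) = 1"
    by blast
  obtain N where "{k. f k \<noteq> 0} \<subseteq> {..<N}"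
    using finite_nat_bounded[OF fin] by blast
  then have vanish: "\<And>k. N \<le> k \<Longrightarrow> f k / h k = 0"
    by fastforce
  have hf: "\<And>k. h k * (f k / h k) = f k"
    using h_pos by (simp add: less_imp_neq[symmetric])
  note forms = finitely_supported_forms[of N "\<lambda>k. f k / h k", OF vanish, unfolded hf]
  show "x \<in> {(\<Sum>k<N. w k * (g (Suc k) - g k)^2) | g N.
      (\<forall>k\<ge>N. g k = 0) \<and> (\<Sum>k<N. \<nu> k * (g k)^2) = 1}"
    unfolding mem_Collect_eq
    by (intro exI[of _ "\<lambda>k. f k / h k"] exI[of _ N]) (use x norm forms vanish in simp)
next
  fix x
  assume "x \<in> {(\<Sum>k<N. w k * (g (Suc k) - g k)^2) | g N.
      (\<forall>k\<ge>N. g k = 0) \<and> (\<Sum>k<N. \<nu> k * (g k)^2) = 1}"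
  then obtain g N where x: "x = (\<Sum>k<N. w k * (g (Suc k) - g k)^2)"
    and vanish: "\<And>k. N \<le> k \<Longrightarrow> g k = 0" and norm: "(\<Sum>k<N. \<nu> k * (g k)^2) = 1"
    by auto
  have "finite {k. h k * g k \<noteq> 0}"
    by (rule finite_subset[of _ "{..<N}"]) (use vanish not_le in auto)
  then show "x \<in> {(\<Sum>k. mu a b k * (b k * (f (Suc k) - f k)^2 - c k * (f k)^2)) | f.
      finite {k. f k \<noteq> 0} \<and> (\<Sum>k. mu a b k * (f k)^2) = 1}"
    unfolding mem_Collect_eq
    by (intro exI[of _ "\<lambda>k. h k * g k"]) (use x norm finitely_supported_forms[of N g, OF vanish] in simp)
qed

lemma normalized_energies_nonneg: "x \<in> normalized_energies \<Longrightarrow> 0 \<le> x"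
  unfolding normalized_energies_def using w_pos by (auto intro!: sum_nonneg simp: less_imp_le)

lemma normalized_energies_nonempty: "normalized_energies \<noteq> {}"
proof -
  have "\<nu> 0 = 1"
    by (simp add: \<nu>_def mu_def h_0)
  then have "w 0 \<in> normalized_energies"
    unfolding normalized_energies_def
    by (intro CollectI exI[of _ "\<lambda>k. if k = 0 then 1 else 0"] exI[of _ 1]) simp
  then show ?thesis
    by blast
qed

lemma lambda0_nonneg: "0 \<le> lambda0 a b c"
  unfolding lambda0_ground_state
  using normalized_energies_nonempty normalized_energies_nonneg by (intro cInf_greatest) auto

lemma lambda0_le_energy:
  assumes vanish: "\<And>k. N \<le> k \<Longrightarrow> g k = 0"
  shows "lambda0 a b c * (\<Sum>k<N. \<nu> k * (g k)^2) \<le> (\<Sum>k<N. w k * (g (Suc k) - g k)^2)"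
proof -
  define Z where "Z = (\<Sum>k<N. \<nu> k * (g k)^2)"
  have energy_nonneg: "0 \<le> (\<Sum>k<N. w k * (g (Suc k) - g k)^2)"
    using w_pos by (intro sum_nonneg) (simp add: less_imp_le)
  have "0 \<le> Z"
    unfolding Z_def using \<nu>_pos by (intro sum_nonneg) (simp add: less_imp_le)
  show ?thesis
  proof (cases "Z = 0")
    case False
    with \<open>0 \<le> Z\<close> have "0 < Z"
      by simp
    let ?g = "\<lambda>k. g k / sqrt Z"
    have "(\<Sum>k<N. w k * (?g (Suc k) - ?g k)^2) \<in> normalized_energies"
      unfolding normalized_energies_def
    proof (intro CollectI exI conjI)
      show "(\<Sum>k<N. \<nu> k * (?g k)^2) = 1"
        using \<open>0 < Z\<close> by (simp add: Z_def power_divide sum_divide_distrib[symmetric])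
    qed (use vanish in auto)
    then have "lambda0 a b c \<le> (\<Sum>k<N. w k * (g (Suc k) - g k)^2) / Z"
      unfolding lambda0_ground_state
      using \<open>0 < Z\<close> normalized_energies_nonneg
      by (intro cInf_lower bdd_belowI[of _ 0])
        (auto simp: power_divide diff_divide_distrib[symmetric] sum_divide_distrib[symmetric])
    with \<open>0 < Z\<close> show ?thesis
      by (simp add: Z_def pos_le_divide_eq)
  qed (simp add: Z_def energy_nonneg)
qed

lemma lambda0_ge:
  assumes "0 < C"
    and hardy: "\<And>g N. (\<And>k. N \<le> k \<Longrightarrow> g k = 0) \<Longrightarrow>
      (\<Sum>k<N. \<nu> k * (g k)^2) \<le> C * (\<Sum>k<N. w k * (g (Suc k) - g k)^2)"
  shows "1 / C \<le> lambda0 a b c"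
  unfolding lambda0_ground_state
proof (rule cInf_greatest[OF normalized_energies_nonempty])
  fix x
  assume "x \<in> normalized_energies"
  then obtain g N where x: "x = (\<Sum>k<N. w k * (g (Suc k) - g k)^2)"
    and vanish: "\<And>k. N \<le> k \<Longrightarrow> g k = 0" and norm: "(\<Sum>k<N. \<nu> k * (g k)^2) = 1"
    unfolding normalized_energies_def by auto
  have "1 \<le> C * x"
    using hardy[of N g, OF vanish] by (simp only: x norm)
  with \<open>0 < C\<close> show "1 / C \<le> x"
    by (simp add: divide_le_eq mult.commute)
qed

lemma delta_eq_muckenhoupt_const: "delta a b c = muckenhoupt_const \<nu> w"
  by (simp add: delta_def muckenhoupt_const_def \<nu>_def w_def)

lemma delta_le_inverse_lambda0: "delta a b c \<le> inverse (ennreal (lambda0 a b c))"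
proof (cases "lambda0 a b c = 0")
  case False
  with lambda0_nonneg have pos: "0 < lambda0 a b c"
    by simp
  have "delta a b c \<le> ennreal (1 / lambda0 a b c)"
    unfolding delta_eq_muckenhoupt_const
  proof (rule muckenhoupt_const_le)
    fix n M
    have "lambda0 a b c * ((\<Sum>j\<le>n. \<nu> j) * (\<Sum>k<M. 1 / w (k + n))) \<le> 1"
      using \<nu>_pos w_pos lambda0_le_energy
      by (intro hardy_inequality_imp_muckenhoupt_bound) (auto simp: less_imp_le)
    with pos show "(\<Sum>j\<le>n. \<nu> j) * (\<Sum>k<M. 1 / w (k + n)) \<le> 1 / lambda0 a b c"
      by (simp add: le_divide_eq mult.commute)
  qed (use \<nu>_pos w_pos in \<open>auto simp: less_imp_le\<close>)
  with pos show ?thesis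
    by (simp add: inverse_ennreal inverse_eq_divide)
qed simp

lemma inverse_lambda0_le_4_delta: "inverse (ennreal (lambda0 a b c)) \<le> 4 * delta a b c"
proof (cases "delta a b c = \<infinity>")
  case False
  define B where "B = enn2real (delta a b c)"
  have delta_B: "muckenhoupt_const \<nu> w = ennreal B" and "0 \<le> B"
    using False by (simp_all add: B_def delta_eq_muckenhoupt_const[symmetric] ennreal_enn2real_if)
  note finite = muckenhoupt_const_finite[OF \<nu>_pos w_pos delta_B \<open>0 \<le> B\<close>]
  have "0 < (\<Sum>k. 1 / w (k + 0))"
    using finite(1) w_pos by (intro suminf_pos) auto
  with \<nu>_pos[of 0] have "0 < (\<Sum>j\<le>0. \<nu> j) * (\<Sum>k. 1 / w (k + 0))"
    by simp
  with finite(2)[of 0] have "0 < B"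
    by linarith
  have "1 / (4 * B) \<le> lambda0 a b c"
    using \<open>0 < B\<close> by (intro lambda0_ge)
      (auto intro: discrete_hardy_inequality[OF \<nu>_pos w_pos finite])
  moreover have "0 < 1 / (4 * B)"
    using \<open>0 < B\<close> by simp
  ultimately have "0 < lambda0 a b c"
    by linarith
  with \<open>1 / (4 * B) \<le> lambda0 a b c\<close> \<open>0 < B\<close> have "1 / lambda0 a b c \<le> 4 * B"
    by (simp add: field_simps)
  with \<open>0 < lambda0 a b c\<close> have "inverse (ennreal (lambda0 a b c)) \<le> ennreal (4 * B)"
    by (simp add: inverse_ennreal inverse_eq_divide ennreal_leI)
  then show ?thesis
    using \<open>0 \<le> B\<close> by (simp add: delta_eq_muckenhoupt_const delta_B ennreal_mult)
qed simp

end

theorem theorem2p6: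
  fixes a b c :: "nat \<Rightarrow> real"
  assumes "\<And>i. b i > 0"
    and "\<And>i. i \<ge> 1 \<Longrightarrow> a i > 0"
    and "\<And>i. c i \<le> 0"
  shows "delta a b c \<le> inverse (ennreal (lambda0 a b c))
       \<and> inverse (ennreal (lambda0 a b c)) \<le> 4 * delta a b c
       \<and> (lambda0 a b c > 0 \<longleftrightarrow> delta a b c < \<infinity>)"
proof -
  interpret birth_death a b c
    using assms by unfold_locales
  have lower: "delta a b c \<le> inverse (ennreal (lambda0 a b c))"
    by (rule delta_le_inverse_lambda0)
  have upper: "inverse (ennreal (lambda0 a b c)) \<le> 4 * delta a b c"
    by (rule inverse_lambda0_le_4_delta)
  have "lambda0 a b c > 0 \<longleftrightarrow> inverse (ennreal (lambda0 a b c)) < \<infinity>"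
    using lambda0_nonneg by (simp add: top.not_eq_extremum[symmetric] less_le)
  also have "\<dots> \<longleftrightarrow> delta a b c < \<infinity>"
  proof
    assume "inverse (ennreal (lambda0 a b c)) < \<infinity>"
    with lower show "delta a b c < \<infinity>"
      by (rule le_less_trans)
  next
    assume "delta a b c < \<infinity>"
    then have "4 * delta a b c < \<infinity>"
      by (simp add: ennreal_mult_less_top)
    with upper show "inverse (ennreal (lambda0 a b c)) < \<infinity>"
      by (rule le_less_trans)
  qed
  finally show ?thesis
    using lower upper by blast
qed

end
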